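(* Let $n\ge 2$, let $\mathcal{B}$ be a maximal commutative subalgebra of $\mathcal{M}_{d\times d}(\mathbb{C})$, and let $\mathcal{A}$ be a maximal subalgebra of $\mathcal{T}_{n,d}(\mathcal{B})$ (i.e. an algebra contained in $\mathcal{T}_{n,d}(\mathcal{B})$ not properly contained in any other algebra contained in $\mathcal{T}_{n,d}(\mathcal{B})$). Suppose $\mathcal{A}$ contains an element $\mathbf{T}=(T_{p-q})_{p,q=0}^{n-1}$ such that $T_p$ is invertible for some $p\neq 0$. Then $\mathcal{A}=\mathcal{F}_{A,B}^{\mathcal{B}}$ for some $A,B\in\mathcal{B}$.
   Context: For positive integers $n,d$, $\mathcal{T}_{n,d}$ denotes the set of block Toeplitz matrices $\mathbf{T}=(T_{p-q})_{p,q=0}^{n-1}$: $nd\times nd$ complex matrices partitioned into $n\times n$ blocks of size $d\times d$, whose $(p,q)$ block is $T_{p-q}$ for some $T_{-(n-1)},\dots,T_{n-1}\in\mathcal{M}_{d\times d}(\mathbb{C})$. For a subalgebra $\mathcal{B}\subseteq\mathcal{M}_{d\times d}(\mathbb{C})$, $\mathcal{T}_{n,d}(\mathcal{B})$ is the set of $\mathbf{T}\in\mathcal{T}_{n,d}$ with all $T_j\in\mathcal{B}$. An algebra contained in a set of matrices is a subset that is a linear subspace closed under matrix multiplication. For $A,B\in\mathcal{M}_{d\times d}(\mathbb{C})$, $$\mathcal{F}_{A,B}^{\mathcal{B}}=\{(T_{p-q})_{p,q=0}^{n-1}\in\mathcal{T}_{n,d}(\mathcal{B}) : AT_j=BT_{j-n}\text{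 for } j=1,2,\dots,n-1\}.$$ A maximal commutative subalgebra of $\mathcal{M}_{d\times d}(\mathbb{C})$ is a commutative subalgebra not properly contained in any commutative subalgebra. *)

theory Defs
  imports "Jordan_Normal_Form.Matrix"
begin

text \<open>A subalgebra of M_N(C): a linear subspace closed under multiplication
  (no unit required).\<close>
definition matrix_subalgebra :: "nat \<Rightarrow> complex mat set \<Rightarrow> bool" where
  "matrix_subalgebra N S \<longleftrightarrow>
     S \<subseteq> carrier_mat N N \<and> 0\<^sub>m N N \<in> S \<and>
     (\<forall>a\<in>S. \<forall>b\<in>S. a + b \<in> S) \<and>
     (\<forall>c a. a \<in> S \<longrightarrow> c \<cdot>\<^sub>m a \<in> S) \<and>
     (\<forall>a\<in>S. \<forall>b\<in>S. a * b \<in> S)"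

definition algebra_in :: "nat \<Rightarrow> complex mat set \<Rightarrow> complex mat set \<Rightarrow> bool" where
  "algebra_in N S X \<longleftrightarrow> matrix_subalgebra N S \<and> S \<subseteq> X"

definition maximal_algebra_in :: "nat \<Rightarrow> complex mat set \<Rightarrow> complex mat set \<Rightarrow> bool" where
  "maximal_algebra_in N S X \<longleftrightarrow>
     algebra_in N S X \<and> (\<forall>S'. algebra_in N S' X \<and> S \<subseteq> S' \<longrightarrow> S' = S)"

definition commutative_set :: "complex mat set \<Rightarrow> bool" where
  "commutative_set S \<longleftrightarrow> (\<forall>a\<in>S. \<forall>b\<in>S. a * b = b * a)"

definition maximal_commutative_subalgebra :: "nat \<Rightarrow> complex mat set \<Rightarrow> bool" where
  "maximal_commutative_subalgebra d B \<longleftrightarrow>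
     matrix_subalgebra d B \<and> commutative_set B \<and>
     (\<forall>C. matrix_subalgebra d C \<and> commutative_set C \<and> B \<subseteq> C \<longrightarrow> C = B)"

text \<open>The nd x nd block Toeplitz matrix (T_{p-q})_{p,q=0}^{n-1} with d x d blocks;
  only the values T j for |j| \<le> n-1 are used.\<close>
definition block_toeplitz :: "nat \<Rightarrow> nat \<Rightarrow> (int \<Rightarrow> complex mat) \<Rightarrow> complex mat" where
  "block_toeplitz n d T =
     mat (n * d) (n * d)
       (\<lambda>(i, j). T (int (i div d) - int (j div d)) $$ (i mod d, j mod d))"

definition blocks_in :: "nat \<Rightarrow> complex mat set \<Rightarrow> (int \<Rightarrow> complex mat) \<Rightarrow> bool" where
  "blocks_in n B T \<longleftrightarrow> (\<forall>j::int. \<bar>j\<bar> \<le> int n - 1 \<longrightarrow> T j \<in> B)"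

definition toeplitz_set :: "nat \<Rightarrow> nat \<Rightarrow> complex mat set \<Rightarrow> complex mat set" where
  "toeplitz_set n d B = {block_toeplitz n d T | T. blocks_in n B T}"

definition F_set :: "nat \<Rightarrow> nat \<Rightarrow> complex mat set \<Rightarrow> complex mat \<Rightarrow> complex mat \<Rightarrow> complex mat set" where
  "F_set n d \<B> A B = {block_toeplitz n d T | T. blocks_in n \<B> T \<and>
       (\<forall>j::int. 1 \<le> j \<and> j \<le> int n - 1 \<longrightarrow> A * T j = B * T (j - int n))}"

end

theory Submission
  imports Defs
begin

text \<open>Moving one step down a diagonal of the product of two block Toeplitz matrices with
  blocks \<open>S\<close> and \<open>R\<close> changes the block by \<open>S i * R (j - n) - S (i - n) * R j\<close>, so the
  product is block Toeplitz iff \<open>S i * R (j - n) = S (i - n) * R j\<close> for \<open>1 \<le> i, j \<le> n - 1\<close>.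
  For \<open>X \<in> \<A>\<close>, applied to \<open>T X\<close> with \<open>i = q\<close>, where \<open>q \<in> {p, p + n}\<close> lies in
  \<open>[1, n - 1]\<close>, this says precisely that \<open>X\<close> lies in \<open>F_set n d \<B> (T (q - n)) (T q)\<close>.
  One of these two coefficients is \<open>T p\<close>, hence invertible, and then \<open>F_set n d \<B> A B\<close> is
  itself an algebra: by commutativity of \<open>\<B>\<close>, both \<open>A\<close> and \<open>B\<close> annihilate
  \<open>S i * R (j - n) - S (i - n) * R j\<close> for block sequences \<open>S, R\<close> of the set, so
  cancelling the invertible one makes the product block Toeplitz, and the defining relation
  of the product follows by rotating the summation index. Maximality of \<open>\<A>\<close> concludes.\<close>

lemma block_toeplitz_carrier [simp]:
  "block_toeplitz n d T \<in> carrier_mat (n * d) (n * d)"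
  "dim_row (block_toeplitz n d T) = n * d"
  "dim_col (block_toeplitz n d T) = n * d"
  by (auto simp: block_toeplitz_def)

lemma block_index_less:
  fixes p n a d :: nat
  assumes "p < n" and "a < d"
  shows "p * d + a < n * d"
proof -
  have "p * d + a < Suc p * d" using assms(2) by simp
  also have "\<dots> \<le> n * d" using assms(1) by (intro mult_le_mono1) simp
  finally show ?thesis .
qed

lemma block_toeplitz_index:
  assumes "p < n" "q < n" "a < d" "b < d"
  shows "block_toeplitz n d T $$ (p * d + a, q * d + b) = T (int p - int q) $$ (a, b)"
  using assms block_index_less[of p n a d] block_index_less[of q n b d]
  by (simp add: block_toeplitz_def)

lemma block_mat_eqI:
  assumes "A \<in> carrier_mat (n * d) (n * d)" and "B \<in> carrier_mat (n * d) (n * d)"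
    and "\<And>p q a b. p < n \<Longrightarrow> q < n \<Longrightarrow> a < d \<Longrightarrow> b < d \<Longrightarrow>
           A $$ (p * d + a, q * d + b) = B $$ (p * d + a, q * d + b)"
  shows "A = B"
proof (rule eq_matI)
  fix i j assume "i < dim_row B" "j < dim_col B"
  then have ij: "i < n * d" "j < n * d" using assms(2) by auto
  then have "0 < d" by (cases d) auto
  then have "i div d < n" "j div d < n" "i mod d < d" "j mod d < d"
    using ij by (auto simp: less_mult_imp_div_less)
  from assms(3)[OF this] show "A $$ (i, j) = B $$ (i, j)" by simp
qed (use assms in auto)

lemma sum_lessThan_mult_split:
  fixes f :: "nat \<Rightarrow> 'a::comm_monoid_add"
  shows "(\<Sum>x<n * d. f x) = (\<Sum>k<n. \<Sum>c<d. f (k * d + c))"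
proof -
  have "(\<Sum>x<n * d. f x) = (\<Sum>k<n. \<Sum>x\<in>{k * d..<k * d + d}. f x)"
    by (rule sum.nat_group[symmetric])
  also have "\<dots> = (\<Sum>k<n. \<Sum>c<d. f (k * d + c))"
  proof (rule sum.cong[OF refl])
    fix k
    show "(\<Sum>x\<in>{k * d..<k * d + d}. f x) = (\<Sum>c<d. f (k * d + c))"
      using sum.shift_bounds_nat_ivl[of f 0 "k * d" d] by (simp add: lessThan_atLeast0 add.commute)
  qed
  finally show ?thesis .
qed

lemma blocks_inD: "blocks_in n \<B> T \<Longrightarrow> \<bar>j\<bar> \<le> int n - 1 \<Longrightarrow> T j \<in> \<B>"
  unfolding blocks_in_def by blast

definition product_block ::
  "nat \<Rightarrow> nat \<Rightarrow> (int \<Rightarrow> complex mat) \<Rightarrow> (int \<Rightarrow> complex mat) \<Rightarrow> nat \<Rightarrow> nat \<Rightarrow> complex mat" where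
  "product_block n d S R p q =
     mat d d (\<lambda>ij. \<Sum>k<n. (S (int p - int k) * R (int k - int q)) $$ ij)"

lemma block_toeplitz_mult_index:
  assumes S: "blocks_in n (carrier_mat d d) S" and R: "blocks_in n (carrier_mat d d) R"
    and pq: "p < n" "q < n" and ab: "a < d" "b < d"
  shows "(block_toeplitz n d S * block_toeplitz n d R) $$ (p * d + a, q * d + b)
       = product_block n d S R p q $$ (a, b)"
proof -
  have "(block_toeplitz n d S * block_toeplitz n d R) $$ (p * d + a, q * d + b)
      = (\<Sum>x<n * d. block_toeplitz n d S $$ (p * d + a, x) * block_toeplitz n d R $$ (x, q * d + b))"
    using pq ab block_index_less by (simp add: scalar_prod_def lessThan_atLeast0)
  also have "\<dots> = (\<Sum>k<n. \<Sum>c<d. S (int p - int k) $$ (a, c) * R (int k - int q) $$ (c, b))"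
    unfolding sum_lessThan_mult_split using pq ab
    by (intro sum.cong refl) (simp add: block_toeplitz_index)
  also have "\<dots> = (\<Sum>k<n. (S (int p - int k) * R (int k - int q)) $$ (a, b))"
  proof (intro sum.cong refl)
    fix k assume "k \<in> {..<n}"
    then have "S (int p - int k) \<in> carrier_mat d d" "R (int k - int q) \<in> carrier_mat d d"
      using S R pq unfolding blocks_in_def by auto
    then show "(\<Sum>c<d. S (int p - int k) $$ (a, c) * R (int k - int q) $$ (c, b))
             = (S (int p - int k) * R (int k - int q)) $$ (a, b)"
      using ab by (simp add: scalar_prod_def lessThan_atLeast0)
  qed
  finally show ?thesis using ab by (simp add: product_block_def)
qed

text \<open>The sums for the two blocks share all summands except \<open>k = 0\<close> of the first and
  \<open>k = n - 1\<close> of the second.\<close>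
lemma product_block_Suc:
  assumes "Suc p < n" "Suc q < n" "a < d" "b < d"
  shows "product_block n d S R (Suc p) (Suc q) $$ (a, b)
           + (S (int (Suc p) - int n) * R (int n - int (Suc q))) $$ (a, b)
       = product_block n d S R p q $$ (a, b) + (S (int (Suc p)) * R (- int (Suc q))) $$ (a, b)"
proof -
  obtain m where n: "n = Suc m" using assms by (cases n) auto
  define f where "f u v = (S u * R v) $$ (a, b)" for u v
  have "(\<Sum>k<n. f (int (Suc p) - int k) (int k - int (Suc q)))
      = f (int (Suc p)) (- int (Suc q)) + (\<Sum>k<m. f (int p - int k) (int k - int q))"
    unfolding n sum.lessThan_Suc_shift by simp
  moreover have "(\<Sum>k<n. f (int p - int k) (int k - int q))
      = (\<Sum>k<m. f (int p - int k) (int k - int q)) + f (int (Suc p) - int n) (int n - int (Suc q))"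
    unfolding n by simp
  ultimately show ?thesis using assms by (simp add: product_block_def f_def)
qed

lemma product_block_Suc_eq_iff:
  assumes S: "blocks_in n (carrier_mat d d) S" and R: "blocks_in n (carrier_mat d d) R"
    and pq: "Suc p < n" "Suc q < n"
  shows "product_block n d S R (Suc p) (Suc q) = product_block n d S R p q \<longleftrightarrow>
         S (int (Suc p)) * R (- int (Suc q)) = S (int (Suc p) - int n) * R (int n - int (Suc q))"
    (is "?X = ?Y \<longleftrightarrow> ?A = ?B")
proof -
  have "S (int (Suc p)) \<in> carrier_mat d d" "R (- int (Suc q)) \<in> carrier_mat d d"
    "S (int (Suc p) - int n) \<in> carrier_mat d d" "R (int n - int (Suc q)) \<in> carrier_mat d d"
    using pq by (auto intro!: blocks_inD[OF S] blocks_inD[OF R])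
  then have car: "?A \<in> carrier_mat d d" "?B \<in> carrier_mat d d" by auto
  have "?X = ?Y \<longleftrightarrow> (\<forall>a<d. \<forall>b<d. ?X $$ (a, b) = ?Y $$ (a, b))"
    unfolding mat_eq_iff[of ?X ?Y] by (simp add: product_block_def)
  also have "\<dots> \<longleftrightarrow> (\<forall>a<d. \<forall>b<d. ?A $$ (a, b) = ?B $$ (a, b))"
    using product_block_Suc[OF pq] by (metis add.commute add_left_cancel)
  also have "\<dots> \<longleftrightarrow> ?A = ?B"
    unfolding mat_eq_iff[of ?A ?B] using car by (simp del: index_mult_mat)
  finally show ?thesis .
qed

definition toeplitz_compatible :: "nat \<Rightarrow> (int \<Rightarrow> complex mat) \<Rightarrow> (int \<Rightarrow> complex mat) \<Rightarrow> bool" where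
  "toeplitz_compatible n S R \<longleftrightarrow>
     (\<forall>i j. 1 \<le> i \<longrightarrow> i \<le> int n - 1 \<longrightarrow> 1 \<le> j \<longrightarrow> j \<le> int n - 1 \<longrightarrow>
        S i * R (j - int n) = S (i - int n) * R j)"

lemma toeplitz_compatible_iff_diagonals_constant:
  assumes S: "blocks_in n (carrier_mat d d) S" and R: "blocks_in n (carrier_mat d d) R"
  shows "toeplitz_compatible n S R \<longleftrightarrow>
    (\<forall>p q. Suc p < n \<longrightarrow> Suc q < n \<longrightarrow>
       product_block n d S R (Suc p) (Suc q) = product_block n d S R p q)"
proof
  assume compat: "toeplitz_compatible n S R"
  show "\<forall>p q. Suc p < n \<longrightarrow> Suc q < n \<longrightarrow>
      product_block n d S R (Suc p) (Suc q) = product_block n d S R p q"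
  proof (intro allI impI)
    fix p q assume pq: "Suc p < n" "Suc q < n"
    have "S (int (Suc p)) * R ((int n - int (Suc q)) - int n)
        = S (int (Suc p) - int n) * R (int n - int (Suc q))"
      using compat[unfolded toeplitz_compatible_def, rule_format,
          of "int (Suc p)" "int n - int (Suc q)"] pq
      by simp
    then show "product_block n d S R (Suc p) (Suc q) = product_block n d S R p q"
      using product_block_Suc_eq_iff[OF S R pq] by simp
  qed
next
  assume diag: "\<forall>p q. Suc p < n \<longrightarrow> Suc q < n \<longrightarrow>
      product_block n d S R (Suc p) (Suc q) = product_block n d S R p q"
  show "toeplitz_compatible n S R"
    unfolding toeplitz_compatible_def
  proof (intro allI impI)
    fix i j :: int assume ij: "1 \<le> i" "i \<le> int n - 1" "1 \<le> j" "j \<le> int n - 1"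
    define p q where "p = nat (i - 1)" and "q = nat (int n - 1 - j)"
    have pq: "Suc p < n" "Suc q < n" and i: "i = int (Suc p)" and j: "j = int n - int (Suc q)"
      using ij by (auto simp: p_def q_def)
    show "S i * R (j - int n) = S (i - int n) * R j"
      using diag pq product_block_Suc_eq_iff[OF S R pq] unfolding i j by simp
  qed
qed

lemma toeplitz_compatible_if_mult_block_toeplitz:
  assumes S: "blocks_in n (carrier_mat d d) S" and R: "blocks_in n (carrier_mat d d) R"
    and U: "block_toeplitz n d S * block_toeplitz n d R = block_toeplitz n d U"
  shows "toeplitz_compatible n S R"
  unfolding toeplitz_compatible_iff_diagonals_constant[OF S R]
proof (intro allI impI)
  fix p q assume pq: "Suc p < n" "Suc q < n"
  show "product_block n d S R (Suc p) (Suc q) = product_block n d S R p q"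
  proof (rule eq_matI)
    fix a b
    assume "a < dim_row (product_block n d S R p q)" "b < dim_col (product_block n d S R p q)"
    then have ab: "a < d" "b < d" by (auto simp: product_block_def)
    have "product_block n d S R (Suc p) (Suc q) $$ (a, b) = U (int p - int q) $$ (a, b)"
      using block_toeplitz_mult_index[OF S R pq ab] block_toeplitz_index[OF pq ab, of U]
      by (simp add: U)
    also have "\<dots> = product_block n d S R p q $$ (a, b)"
      using block_toeplitz_mult_index[OF S R _ _ ab, of p q] block_toeplitz_index[of p n q a d b U]
        pq ab
      by (simp add: U)
    finally show "product_block n d S R (Suc p) (Suc q) $$ (a, b)
        = product_block n d S R p q $$ (a, b)" .
  qed (simp_all add: product_block_def)
qed

definition toeplitz_product ::
  "nat \<Rightarrow> nat \<Rightarrow> (int \<Rightarrow> complex mat) \<Rightarrow> (int \<Rightarrow> complex mat) \<Rightarrow> int \<Rightarrow> complex mat" where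
  "toeplitz_product n d S R m =
     (if 0 \<le> m then product_block n d S R (nat m) 0 else product_block n d S R 0 (nat (- m)))"

lemma product_block_eq_toeplitz_product:
  assumes S: "blocks_in n (carrier_mat d d) S" and R: "blocks_in n (carrier_mat d d) R"
    and compat: "toeplitz_compatible n S R" and pq: "p < n" "q < n"
  shows "product_block n d S R p q = toeplitz_product n d S R (int p - int q)"
proof -
  have diag: "product_block n d S R (p' + r) (q' + r) = product_block n d S R p' q'"
    if "p' + r < n" "q' + r < n" for p' q' r
    using that
  proof (induction r)
    case (Suc r)
    then show ?case
      using compat[unfolded toeplitz_compatible_iff_diagonals_constant[OF S R]] by simp
  qed simp
  show ?thesis
  proof (cases "q \<le> p")
    case True
    then show ?thesis
      using diag[of "p - q" q 0] pq by (simp add: toeplitz_product_def nat_diff_distrib')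
  next
    case False
    then show ?thesis
      using diag[of 0 p "q - p"] pq by (simp add: toeplitz_product_def nat_diff_distrib')
  qed
qed

lemma mult_block_toeplitz:
  assumes S: "blocks_in n (carrier_mat d d) S" and R: "blocks_in n (carrier_mat d d) R"
    and compat: "toeplitz_compatible n S R"
  shows "block_toeplitz n d S * block_toeplitz n d R
    = block_toeplitz n d (toeplitz_product n d S R)"
  by (rule block_mat_eqI[where n = n and d = d])
    (simp_all add: mult_carrier_mat[of _ "n * d" "n * d"] block_toeplitz_mult_index[OF S R]
      block_toeplitz_index
      product_block_eq_toeplitz_product[OF S R compat])

lemma sum_lessThan_rotate:
  fixes h :: "nat \<Rightarrow> 'a::comm_monoid_add"
  assumes "c \<le> n"
  shows "(\<Sum>k<n. h (if k < c then k + (n - c) else k - c)) = (\<Sum>k<n. h k)"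
  by (rule sum.reindex_bij_witness[where j = "\<lambda>k. if k < c then k + (n - c) else k - c"
        and i = "\<lambda>k. if k < n - c then k + c else k - (n - c)"]) (use assms in auto)

lemma matrix_subalgebra_carrier: "matrix_subalgebra d \<B> \<Longrightarrow> X \<in> \<B> \<Longrightarrow> X \<in> carrier_mat d d"
  unfolding matrix_subalgebra_def by blast

lemma matrix_subalgebra_mult_assoc:
  "matrix_subalgebra d \<B> \<Longrightarrow> X \<in> \<B> \<Longrightarrow> Y \<in> \<B> \<Longrightarrow> Z \<in> \<B> \<Longrightarrow> X * Y * Z = X * (Y * Z)"
  by (meson assoc_mult_mat matrix_subalgebra_carrier)

lemma commutative_setD: "commutative_set \<B> \<Longrightarrow> X \<in> \<B> \<Longrightarrow> Y \<in> \<B> \<Longrightarrow> X * Y = Y * X"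
  unfolding commutative_set_def by blast

lemma blocks_in_carrier:
  "matrix_subalgebra d \<B> \<Longrightarrow> blocks_in n \<B> T \<Longrightarrow> blocks_in n (carrier_mat d d) T"
  unfolding blocks_in_def using matrix_subalgebra_carrier by blast

lemma matrix_subalgebra_entrywise_sum:
  fixes m :: nat
  assumes \<B>: "matrix_subalgebra d \<B>" and M: "\<And>k. k < m \<Longrightarrow> M k \<in> \<B>"
  shows "mat d d (\<lambda>ij. \<Sum>k<m. M k $$ ij) \<in> \<B>"
  using M
proof (induction m)
  case 0
  have "mat d d (\<lambda>ij. \<Sum>k<0. M k $$ ij) = 0\<^sub>m d d" by (rule eq_matI) auto
  then show ?case using \<B> unfolding matrix_subalgebra_def by (simp only:)
next
  case (Suc m)
  have "M m \<in> carrier_mat d d" using Suc.prems matrix_subalgebra_carrier[OF \<B>] by blast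
  then have sum_Suc: "mat d d (\<lambda>ij. \<Sum>k<Suc m. M k $$ ij)
      = mat d d (\<lambda>ij. \<Sum>k<m. M k $$ ij) + M m"
    by (intro eq_matI) auto
  have "mat d d (\<lambda>ij. \<Sum>k<m. M k $$ ij) \<in> \<B>" "M m \<in> \<B>"
    using Suc by simp_all
  then show ?case
    unfolding sum_Suc using \<B> unfolding matrix_subalgebra_def by blast
qed

lemma mult_entrywise_sum:
  fixes m :: nat
  assumes A: "A \<in> carrier_mat d d" and M: "\<And>k. k < m \<Longrightarrow> M k \<in> carrier_mat d d"
  shows "A * mat d d (\<lambda>ij. \<Sum>k<m. M k $$ ij) = mat d d (\<lambda>ij. \<Sum>k<m. (A * M k) $$ ij)"
proof (rule eq_matI)
  fix a b assume "a < dim_row (mat d d (\<lambda>ij. \<Sum>k<m. (A * M k) $$ ij))"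
    "b < dim_col (mat d d (\<lambda>ij. \<Sum>k<m. (A * M k) $$ ij))"
  then have ab: "a < d" "b < d" by auto
  have "(A * mat d d (\<lambda>ij. \<Sum>k<m. M k $$ ij)) $$ (a, b)
      = (\<Sum>c<d. A $$ (a, c) * (\<Sum>k<m. M k $$ (c, b)))"
    using A ab by (simp add: scalar_prod_def lessThan_atLeast0)
  also have "\<dots> = (\<Sum>k<m. \<Sum>c<d. A $$ (a, c) * M k $$ (c, b))"
    by (simp add: sum_distrib_left sum.swap[of _ "{..<d}"])
  also have "\<dots> = (\<Sum>k<m. (A * M k) $$ (a, b))"
  proof (rule sum.cong[OF refl])
    fix k assume "k \<in> {..<m}"
    then have "M k \<in> carrier_mat d d" using M by simp
    then show "(\<Sum>c<d. A $$ (a, c) * M k $$ (c, b)) = (A * M k) $$ (a, b)"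
      using A ab by (simp add: scalar_prod_def lessThan_atLeast0)
  qed
  finally show "(A * mat d d (\<lambda>ij. \<Sum>k<m. M k $$ ij)) $$ (a, b)
      = mat d d (\<lambda>ij. \<Sum>k<m. (A * M k) $$ ij) $$ (a, b)"
    using ab by simp
qed (use A in auto)

lemma toeplitz_product_blocks_in:
  assumes \<B>: "matrix_subalgebra d \<B>" and S: "blocks_in n \<B> S" and R: "blocks_in n \<B> R"
  shows "blocks_in n \<B> (toeplitz_product n d S R)"
proof -
  have "product_block n d S R p q \<in> \<B>" if "p < n" "q < n" for p q
    unfolding product_block_def
  proof (rule matrix_subalgebra_entrywise_sum[OF \<B>])
    fix k assume "k < n"
    then have "S (int p - int k) \<in> \<B>" "R (int k - int q) \<in> \<B>"
      using that by (auto intro!: blocks_inD[OF S] blocks_inD[OF R])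
    then show "S (int p - int k) * R (int k - int q) \<in> \<B>"
      using \<B> unfolding matrix_subalgebra_def by blast
  qed
  then show ?thesis
    unfolding blocks_in_def toeplitz_product_def by auto
qed

definition F_condition :: "nat \<Rightarrow> complex mat \<Rightarrow> complex mat \<Rightarrow> (int \<Rightarrow> complex mat) \<Rightarrow> bool" where
  "F_condition n A B T \<longleftrightarrow> (\<forall>j::int. 1 \<le> j \<and> j \<le> int n - 1 \<longrightarrow> A * T j = B * T (j - int n))"

lemma F_set_eq:
  "F_set n d \<B> A B = {block_toeplitz n d T | T. blocks_in n \<B> T \<and> F_condition n A B T}"
  unfolding F_set_def F_condition_def ..

lemma F_condition_product_summand:
  assumes \<B>: "matrix_subalgebra d \<B>" "commutative_set \<B>" and AB: "A \<in> \<B>" "B \<in> \<B>"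
    and S: "blocks_in n \<B> S" and R: "blocks_in n \<B> R"
    and FS: "F_condition n A B S" and FR: "F_condition n A B R"
    and m: "1 \<le> m" "m < n" and k: "k < n"
  shows "A * (S (int m - int k) * R (int k)) =
    B * (if k < m then S (int m - int k - int n) * R (int k)
         else S (int m - int k) * R (int k - int n))"
proof -
  note assoc = matrix_subalgebra_mult_assoc[OF \<B>(1)] and comm = commutative_setD[OF \<B>(2)]
  have SR: "S i \<in> \<B>" "R i \<in> \<B>" if "\<bar>i\<bar> \<le> int n - 1" for i
    using blocks_inD[OF S that] blocks_inD[OF R that] .
  show ?thesis
  proof (cases "k < m")
    case True
    have in\<B>: "S (int m - int k) \<in> \<B>" "S (int m - int k - int n) \<in> \<B>" "R (int k) \<in> \<B>"
      using True k m by (auto intro!: SR)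
    have "A * (S (int m - int k) * R (int k)) = A * S (int m - int k) * R (int k)"
      using AB in\<B> by (simp add: assoc)
    also have "\<dots> = B * S (int m - int k - int n) * R (int k)"
      using FS True k m unfolding F_condition_def by simp
    also have "\<dots> = B * (S (int m - int k - int n) * R (int k))"
      using AB in\<B> by (simp add: assoc)
    finally show ?thesis using True by simp
  next
    case False
    have in\<B>: "S (int m - int k) \<in> \<B>" "R (int k) \<in> \<B>" "R (int k - int n) \<in> \<B>"
      using False k m by (auto intro!: SR)
    have "A * (S (int m - int k) * R (int k)) = S (int m - int k) * A * R (int k)"
      using AB in\<B> by (simp add: assoc[symmetric] comm[of A "S (int m - int k)"])
    also have "\<dots> = S (int m - int k) * (B * R (int k - int n))"
      using AB in\<B> FR False k m unfolding F_condition_def by (simp add: assoc)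
    also have "\<dots> = B * (S (int m - int k) * R (int k - int n))"
      using AB in\<B> by (simp add: assoc[symmetric] comm[of "S (int m - int k)" B])
    finally show ?thesis using False by simp
  qed
qed

text \<open>The wrap-around of the block indices is a rotation of the summation index by \<open>m\<close>.\<close>
lemma F_condition_toeplitz_product:
  assumes \<B>: "matrix_subalgebra d \<B>" "commutative_set \<B>" and AB: "A \<in> \<B>" "B \<in> \<B>"
    and S: "blocks_in n \<B> S" and R: "blocks_in n \<B> R"
    and FS: "F_condition n A B S" and FR: "F_condition n A B R"
  shows "F_condition n A B (toeplitz_product n d S R)"
  unfolding F_condition_def
proof (intro allI impI)
  fix j :: int assume "1 \<le> j \<and> j \<le> int n - 1"
  then obtain m where j: "j = int m" and m: "1 \<le> m" "m < n"
    by (intro that[of "nat j"]) auto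
  note car = matrix_subalgebra_carrier[OF \<B>(1)]
  define h where "h k = S (- int k) * R (int k - int (n - m))" for k
  have summand: "A * (S (int m - int k) * R (int k)) = B * h (if k < m then k + (n - m) else k - m)"
    if "k < n" for k
    using F_condition_product_summand[OF \<B> AB S R FS FR m that] m
    by (simp add: h_def of_nat_diff algebra_simps)
  have in_carrier: "S (int p - int k) * R (int k - int q) \<in> carrier_mat d d"
    if "p < n" "k < n" "q < n" for p k q
    using that by (intro mult_carrier_mat[of _ d d _ d] car blocks_inD[OF S] blocks_inD[OF R]) auto
  have "toeplitz_product n d S R j = mat d d (\<lambda>ij. \<Sum>k<n. (S (int m - int k) * R (int k)) $$ ij)"
    unfolding j toeplitz_product_def product_block_def by simp
  then have "A * toeplitz_product n d S R j
      = mat d d (\<lambda>ij. \<Sum>k<n. (A * (S (int m - int k) * R (int k))) $$ ij)"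
    using in_carrier[of m _ 0] m by (simp add: mult_entrywise_sum car AB)
  also have "\<dots> = mat d d (\<lambda>ij. \<Sum>k<n. (B * h (if k < m then k + (n - m) else k - m)) $$ ij)"
    using summand by simp
  also have "\<dots> = mat d d (\<lambda>ij. \<Sum>k<n. (B * h k) $$ ij)"
    using sum_lessThan_rotate[of m n "\<lambda>k. (B * h k) $$ _"] m by simp
  also have "\<dots> = B * mat d d (\<lambda>ij. \<Sum>k<n. h k $$ ij)"
    using in_carrier[of 0 _ "n - m"] m by (simp add: mult_entrywise_sum car AB h_def)
  also have "mat d d (\<lambda>ij. \<Sum>k<n. h k $$ ij) = toeplitz_product n d S R (j - int n)"
    unfolding j toeplitz_product_def product_block_def h_def using m by simp
  finally show "A * toeplitz_product n d S R j = B * toeplitz_product n d S R (j - int n)" .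
qed

lemma block_toeplitz_add:
  assumes S: "blocks_in n (carrier_mat d d) S" and R: "blocks_in n (carrier_mat d d) R"
  shows "block_toeplitz n d S + block_toeplitz n d R = block_toeplitz n d (\<lambda>j. S j + R j)"
proof (rule block_mat_eqI[where n = n and d = d])
  fix p q a b assume pq: "p < n" "q < n" and ab: "a < d" "b < d"
  then have "S (int p - int q) \<in> carrier_mat d d" "R (int p - int q) \<in> carrier_mat d d"
    by (auto intro!: blocks_inD[OF S] blocks_inD[OF R])
  then show "(block_toeplitz n d S + block_toeplitz n d R) $$ (p * d + a, q * d + b)
      = block_toeplitz n d (\<lambda>j. S j + R j) $$ (p * d + a, q * d + b)"
    using pq ab block_index_less by (simp add: block_toeplitz_index)
qed simp_all

lemma block_toeplitz_smult:
  assumes S: "blocks_in n (carrier_mat d d) S"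
  shows "c \<cdot>\<^sub>m block_toeplitz n d S = block_toeplitz n d (\<lambda>j. c \<cdot>\<^sub>m S j)"
proof (rule block_mat_eqI[where n = n and d = d])
  fix p q a b assume pq: "p < n" "q < n" and ab: "a < d" "b < d"
  then have "S (int p - int q) \<in> carrier_mat d d"
    by (auto intro!: blocks_inD[OF S])
  then show "(c \<cdot>\<^sub>m block_toeplitz n d S) $$ (p * d + a, q * d + b)
      = block_toeplitz n d (\<lambda>j. c \<cdot>\<^sub>m S j) $$ (p * d + a, q * d + b)"
    using pq ab block_index_less by (simp add: block_toeplitz_index)
qed simp_all

lemma block_toeplitz_zero: "block_toeplitz n d (\<lambda>j. 0\<^sub>m d d) = 0\<^sub>m (n * d) (n * d)"
  by (rule block_mat_eqI[where n = n and d = d])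
    (simp_all add: block_toeplitz_index block_index_less)

lemma invertible_mat_mult_left_cancel:
  fixes M X Y :: "'a::comm_ring_1 mat"
  assumes inv: "invertible_mat M" and M: "M \<in> carrier_mat d d"
    and XY: "X \<in> carrier_mat d e" "Y \<in> carrier_mat d e" and eq: "M * X = M * Y"
  shows "X = Y"
proof -
  obtain N where MN: "M * N = 1\<^sub>m d" and NM: "N * M = 1\<^sub>m (dim_row N)"
    using inv M unfolding invertible_mat_def inverts_mat_def by auto
  have N: "N \<in> carrier_mat d d"
    using arg_cong[OF MN, of dim_col] arg_cong[OF NM, of dim_col] M by auto
  have "X = N * M * X" using NM N XY by simp
  also have "\<dots> = N * (M * Y)" using N M XY by (simp add: eq assoc_mult_mat[of _ d d _ d _ e])
  also have "\<dots> = Y" using NM N M XY by (simp flip: assoc_mult_mat[of _ d d _ d _ e])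
  finally show ?thesis .
qed

lemma F_condition_cross_terms:
  assumes \<B>: "matrix_subalgebra d \<B>" "commutative_set \<B>" and AB: "A \<in> \<B>" "B \<in> \<B>"
    and S: "blocks_in n \<B> S" and R: "blocks_in n \<B> R"
    and FS: "F_condition n A B S" and FR: "F_condition n A B R"
    and ij: "1 \<le> i" "i \<le> int n - 1" "1 \<le> j" "j \<le> int n - 1"
  shows "A * (S i * R (j - int n)) = A * (S (i - int n) * R j)"
    and "B * (S i * R (j - int n)) = B * (S (i - int n) * R j)"
proof -
  note assoc = matrix_subalgebra_mult_assoc[OF \<B>(1)] and comm = commutative_setD[OF \<B>(2)]
  have in\<B>: "S i \<in> \<B>" "S (i - int n) \<in> \<B>" "R j \<in> \<B>" "R (j - int n) \<in> \<B>"
    using ij by (auto intro!: blocks_inD[OF S] blocks_inD[OF R])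
  have FSi: "A * S i = B * S (i - int n)" and FRj: "A * R j = B * R (j - int n)"
    using FS FR ij unfolding F_condition_def by auto
  have "A * (S i * R (j - int n)) = S (i - int n) * (B * R (j - int n))"
    using AB in\<B> by (simp add: assoc[symmetric] FSi comm[of B "S (i - int n)"])
  also have "\<dots> = A * (S (i - int n) * R j)"
    using AB in\<B> by (simp add: assoc[symmetric] FRj[symmetric] comm[of A "S (i - int n)"])
  finally show "A * (S i * R (j - int n)) = A * (S (i - int n) * R j)" .
  have "B * (S i * R (j - int n)) = S i * (B * R (j - int n))"
    using AB in\<B> by (simp add: assoc[symmetric] comm[of B "S i"])
  also have "\<dots> = A * S i * R j"
    using AB in\<B> by (simp add: assoc[symmetric] FRj[symmetric] comm[of A "S i"])
  also have "\<dots> = B * (S (i - int n) * R j)"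
    using AB in\<B> by (simp add: assoc FSi)
  finally show "B * (S i * R (j - int n)) = B * (S (i - int n) * R j)" .
qed

lemma toeplitz_compatible_if_F_condition:
  assumes \<B>: "matrix_subalgebra d \<B>" "commutative_set \<B>" and AB: "A \<in> \<B>" "B \<in> \<B>"
    and inv: "invertible_mat A \<or> invertible_mat B"
    and S: "blocks_in n \<B> S" and R: "blocks_in n \<B> R"
    and FS: "F_condition n A B S" and FR: "F_condition n A B R"
  shows "toeplitz_compatible n S R"
  unfolding toeplitz_compatible_def
proof (intro allI impI)
  fix i j :: int assume ij: "1 \<le> i" "i \<le> int n - 1" "1 \<le> j" "j \<le> int n - 1"
  note car = matrix_subalgebra_carrier[OF \<B>(1)]
  have "S i \<in> carrier_mat d d" "S (i - int n) \<in> carrier_mat d d"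
    "R j \<in> carrier_mat d d" "R (j - int n) \<in> carrier_mat d d"
    using ij by (auto intro!: car blocks_inD[OF S] blocks_inD[OF R])
  then have "S i * R (j - int n) \<in> carrier_mat d d" "S (i - int n) * R j \<in> carrier_mat d d"
    by simp_all
  note cancel = invertible_mat_mult_left_cancel[OF _ _ this]
  from inv show "S i * R (j - int n) = S (i - int n) * R j"
  proof
    assume "invertible_mat A"
    then show ?thesis
      using cancel car[OF AB(1)] F_condition_cross_terms(1)[OF \<B> AB S R FS FR ij] by blast
  next
    assume "invertible_mat B"
    then show ?thesis
      using cancel car[OF AB(2)] F_condition_cross_terms(2)[OF \<B> AB S R FS FR ij] by blast
  qed
qed

lemma zero_mem_F_set:
  assumes \<B>: "matrix_subalgebra d \<B>" and AB: "A \<in> \<B>" "B \<in> \<B>"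
  shows "0\<^sub>m (n * d) (n * d) \<in> F_set n d \<B> A B"
proof -
  have "blocks_in n \<B> (\<lambda>j. 0\<^sub>m d d)"
    using \<B> unfolding blocks_in_def matrix_subalgebra_def by auto
  moreover have "F_condition n A B (\<lambda>j. 0\<^sub>m d d)"
    using matrix_subalgebra_carrier[OF \<B> AB(1)] matrix_subalgebra_carrier[OF \<B> AB(2)]
    unfolding F_condition_def by simp
  ultimately show ?thesis
    unfolding F_set_eq block_toeplitz_zero[symmetric] by blast
qed

lemma add_mem_F_set:
  assumes \<B>: "matrix_subalgebra d \<B>" and AB: "A \<in> \<B>" "B \<in> \<B>"
    and XY: "X \<in> F_set n d \<B> A B" "Y \<in> F_set n d \<B> A B"
  shows "X + Y \<in> F_set n d \<B> A B"
proof -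
  note car = matrix_subalgebra_carrier[OF \<B>]
  obtain S R where X: "X = block_toeplitz n d S" and S: "blocks_in n \<B> S" "F_condition n A B S"
    and Y: "Y = block_toeplitz n d R" and R: "blocks_in n \<B> R" "F_condition n A B R"
    using XY unfolding F_set_eq by blast
  have "blocks_in n \<B> (\<lambda>j. S j + R j)"
    using S R \<B> unfolding blocks_in_def matrix_subalgebra_def by auto
  moreover have "F_condition n A B (\<lambda>j. S j + R j)"
    unfolding F_condition_def
  proof (intro allI impI)
    fix j :: int assume j: "1 \<le> j \<and> j \<le> int n - 1"
    then have "S j \<in> carrier_mat d d" "R j \<in> carrier_mat d d"
      "S (j - int n) \<in> carrier_mat d d" "R (j - int n) \<in> carrier_mat d d"
      by (auto intro!: car blocks_inD[OF S(1)] blocks_inD[OF R(1)])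
    then show "A * (S j + R j) = B * (S (j - int n) + R (j - int n))"
      using S(2) R(2) j car[OF AB(1)] car[OF AB(2)] unfolding F_condition_def
      by (simp add: mult_add_distrib_mat)
  qed
  ultimately show ?thesis
    unfolding X Y block_toeplitz_add[OF blocks_in_carrier[OF \<B> S(1)] blocks_in_carrier[OF \<B> R(1)]]
      F_set_eq by blast
qed

lemma smult_mem_F_set:
  assumes \<B>: "matrix_subalgebra d \<B>" and AB: "A \<in> \<B>" "B \<in> \<B>" and X: "X \<in> F_set n d \<B> A B"
  shows "c \<cdot>\<^sub>m X \<in> F_set n d \<B> A B"
proof -
  note car = matrix_subalgebra_carrier[OF \<B>]
  obtain S where X: "X = block_toeplitz n d S" and S: "blocks_in n \<B> S" "F_condition n A B S"
    using X unfolding F_set_eq by blast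
  have "blocks_in n \<B> (\<lambda>j. c \<cdot>\<^sub>m S j)"
    using S \<B> unfolding blocks_in_def matrix_subalgebra_def by auto
  moreover have "F_condition n A B (\<lambda>j. c \<cdot>\<^sub>m S j)"
    unfolding F_condition_def
  proof (intro allI impI)
    fix j :: int assume j: "1 \<le> j \<and> j \<le> int n - 1"
    then have "S j \<in> carrier_mat d d" "S (j - int n) \<in> carrier_mat d d"
      by (auto intro!: car blocks_inD[OF S(1)])
    then show "A * (c \<cdot>\<^sub>m S j) = B * (c \<cdot>\<^sub>m S (j - int n))"
      using S(2) j car[OF AB(1)] car[OF AB(2)] unfolding F_condition_def
      by (simp add: mult_smult_distrib)
  qed
  ultimately show ?thesis
    unfolding X block_toeplitz_smult[OF blocks_in_carrier[OF \<B> S(1)]] F_set_eq by blast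
qed

lemma mult_mem_F_set:
  assumes \<B>: "matrix_subalgebra d \<B>" "commutative_set \<B>" and AB: "A \<in> \<B>" "B \<in> \<B>"
    and inv: "invertible_mat A \<or> invertible_mat B"
    and XY: "X \<in> F_set n d \<B> A B" "Y \<in> F_set n d \<B> A B"
  shows "X * Y \<in> F_set n d \<B> A B"
proof -
  obtain S R where X: "X = block_toeplitz n d S" and S: "blocks_in n \<B> S" "F_condition n A B S"
    and Y: "Y = block_toeplitz n d R" and R: "blocks_in n \<B> R" "F_condition n A B R"
    using XY unfolding F_set_eq by blast
  have "X * Y = block_toeplitz n d (toeplitz_product n d S R)"
    unfolding X Y using toeplitz_compatible_if_F_condition[OF \<B> AB inv S(1) R(1) S(2) R(2)]
    by (rule mult_block_toeplitz[OF blocks_in_carrier[OF \<B>(1) S(1)] blocks_in_carrier[OF \<B>(1) R(1)]])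
  moreover have "blocks_in n \<B> (toeplitz_product n d S R)"
    using toeplitz_product_blocks_in[OF \<B>(1) S(1) R(1)] .
  moreover have "F_condition n A B (toeplitz_product n d S R)"
    using F_condition_toeplitz_product[OF \<B> AB S(1) R(1) S(2) R(2)] .
  ultimately show ?thesis unfolding F_set_eq by blast
qed

lemma F_set_algebra:
  assumes \<B>: "matrix_subalgebra d \<B>" "commutative_set \<B>" and AB: "A \<in> \<B>" "B \<in> \<B>"
    and inv: "invertible_mat A \<or> invertible_mat B"
  shows "algebra_in (n * d) (F_set n d \<B> A B) (toeplitz_set n d \<B>)"
proof -
  have "F_set n d \<B> A B \<subseteq> toeplitz_set n d \<B>"
    unfolding F_set_eq toeplitz_set_def by blast
  moreover have "F_set n d \<B> A B \<subseteq> carrier_mat (n * d) (n * d)"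
    unfolding F_set_eq by auto
  ultimately show ?thesis
    unfolding algebra_in_def matrix_subalgebra_def
    using zero_mem_F_set[OF \<B>(1) AB] add_mem_F_set[OF \<B>(1) AB] smult_mem_F_set[OF \<B>(1) AB]
      mult_mem_F_set[OF \<B> AB inv]
    by (intro conjI ballI allI impI) simp_all
qed

lemma algebra_in_toeplitz_set_subset_F_set:
  assumes \<A>: "algebra_in (n * d) \<A> (toeplitz_set n d \<B>)" and \<B>: "matrix_subalgebra d \<B>"
    and T: "block_toeplitz n d T \<in> \<A>" "blocks_in n \<B> T" and q: "1 \<le> q" "q \<le> int n - 1"
  shows "\<A> \<subseteq> F_set n d \<B> (T (q - int n)) (T q)"
proof
  fix X assume "X \<in> \<A>"
  then obtain S where X: "X = block_toeplitz n d S" and S: "blocks_in n \<B> S"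
    using \<A> unfolding algebra_in_def toeplitz_set_def by blast
  have "block_toeplitz n d T * X \<in> toeplitz_set n d \<B>"
    using \<A> T(1) \<open>X \<in> \<A>\<close> unfolding algebra_in_def matrix_subalgebra_def by blast
  then obtain U where "block_toeplitz n d T * block_toeplitz n d S = block_toeplitz n d U"
    unfolding X toeplitz_set_def by blast
  then have "toeplitz_compatible n T S"
    by (rule toeplitz_compatible_if_mult_block_toeplitz
        [OF blocks_in_carrier[OF \<B> T(2)] blocks_in_carrier[OF \<B> S]])
  then have "F_condition n (T (q - int n)) (T q) S"
    using q unfolding toeplitz_compatible_def F_condition_def by simp
  then show "X \<in> F_set n d \<B> (T (q - int n)) (T q)"
    unfolding F_set_eq X using S by blast
qed

theorem corollary4p6:
  fixes n d :: nat and \<B> \<A> :: "complex mat set"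
  assumes "n \<ge> 2" and "d \<ge> 1"
    and "maximal_commutative_subalgebra d \<B>"
    and "maximal_algebra_in (n * d) \<A> (toeplitz_set n d \<B>)"
    and "\<exists>T. block_toeplitz n d T \<in> \<A> \<and> blocks_in n \<B> T \<and>
           (\<exists>p::int. p \<noteq> 0 \<and> \<bar>p\<bar> \<le> int n - 1 \<and> invertible_mat (T p))"
  shows "\<exists>A\<in>\<B>. \<exists>B\<in>\<B>. \<A> = F_set n d \<B> A B"
proof -
  have \<B>: "matrix_subalgebra d \<B>" "commutative_set \<B>"
    using assms(3) unfolding maximal_commutative_subalgebra_def by auto
  have \<A>: "algebra_in (n * d) \<A> (toeplitz_set n d \<B>)"
    and \<A>_max: "\<And>\<A>'. algebra_in (n * d) \<A>' (toeplitz_set n d \<B>) \<Longrightarrow> \<A> \<subseteq> \<A>' \<Longrightarrow> \<A>' = \<A>"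
    using assms(4) unfolding maximal_algebra_in_def by auto
  obtain T p where T: "block_toeplitz n d T \<in> \<A>" "blocks_in n \<B> T"
    and p: "p \<noteq> 0" "\<bar>p\<bar> \<le> int n - 1" "invertible_mat (T p)"
    using assms(5) by blast
  define q where "q = (if 0 < p then p else p + int n)"
  have q: "1 \<le> q" "q \<le> int n - 1" and "p = q \<or> p = q - int n"
    using p(1,2) by (auto simp: q_def)
  then have inv: "invertible_mat (T (q - int n)) \<or> invertible_mat (T q)"
    using p(3) by auto
  have AB: "T (q - int n) \<in> \<B>" "T q \<in> \<B>"
    using q by (auto intro!: blocks_inD[OF T(2)])
  have "F_set n d \<B> (T (q - int n)) (T q) = \<A>"
    using \<A>_max[OF F_set_algebra[OF \<B> AB inv]
        algebra_in_toeplitz_set_subset_F_set[OF \<A> \<B>(1) T q]] .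
  then show ?thesis using AB by blast
qed

end
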